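(* Let $G$ be a connected simple graph without bridges whose edge set is identified with $[d+1]$, let $B_1,\dots,B_n$ be the bases (spanning trees) of its graphic matroid, all of cardinality $k$, and let $P=\operatorname{tconv}\{-e_{B_1},\dots,-e_{B_n}\}\subseteq\mathbb{T}^d$ with $V=(-e_{B_1},\dots,-e_{B_n})$. Then the set of coarse types of the maximal cells of the tropical complex $\mathcal{C}_V$ is exactly the set of tuples $(t_1,\dots,t_{d+1})$ obtained as follows: choose an integer $d'\in\{0,1,\dots,d-k+1\}$ and pairwise distinct elements $i_1,i_2,\dots,i_{d'+1}\in[d+1]$ such that $[d+1]\setminus\{i_1,\dots,i_{d'}\}$ contains a basis of the matroid, and set $$t_j=\begin{cases} b_{\{i_1\},\emptyset}+b_{\emptyset,\{i_1,i_2,\dots,i_{d'+1}\}} & \text{if } j=i_1,\\ b_{\{i_l\},\{i_1,\dots,i_{l-1}\}} & \text{if } j=i_l \text{ with } 2\le l\le d'+1,\\ 0 & \text{otherwise.}\end{cases}$$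
   Context: Tropical arithmetic is min-plus: $a\oplus b=\min(a,b)$, $a\odot b=a+b$, extended componentwise on $\mathbb{R}^{d+1}$ (with $\lambda\odot x=(\lambda+x_1,\dots,\lambda+x_{d+1})$). The tropical torus is $\mathbb{T}^d=\mathbb{R}^{d+1}/\mathbb{R}(1,\dots,1)$. The tropical convex hull of $v_1,\dots,v_n$ is $\operatorname{tconv}\{v_1,\dots,v_n\}=\{\bigoplus_l \lambda_l\odot v_l:\lambda_l\in\mathbb{R}\}$. For $B\subseteq[d+1]$, $e_B=\sum_{i\in B}e_i$ where $e_i$ are the unit vectors of $\mathbb{R}^{d+1}$. For $m\in[d+1]$ let $\bar S_m=\{\xi\in\mathbb{T}^d:\xi_m=\min_i\xi_i\}$. For $V=(v_1,\dots,v_n)$ and $x\in\mathbb{T}^d$, the (fine) type is $\operatorname{type}_V(x)=(T_1,\dots,T_{d+1})$ with $T_m=\{l\in[n]: v_l\in x+\bar S_m\}$. The cells $\{x:\operatorname{type}_V(x)=\mathcal{T}\}$ are relatively open polyhedra, and their closures form a polyhedral subdivision $\mathcal{C}_V$ of $\mathbb{T}^d$, the tropical complex; maximal cells are the inclusion-maximal (full-dimensional) ones. The coarse type of a point is $(|T_1|,\dots,|T_{d+1}|)$, and the coarse type of a cell is the coarse type of its relative interior points. For $I,J\subseteq[d+1]$, $b_{I,J}$ denotes the number of bases $B$ of the matroid with $I\subseteq B$ and $J\cap B=\emptyset$. *)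

theory Defs
  imports "HOL-Analysis.Analysis"
begin

text \<open>A graph is given by a finite vertex set Vs and an endpoint map ends :: 'e => 'v set;
  the edge set is UNIV :: 'e set, identified with [d+1] where d+1 = CARD('e).\<close>

definition simple_graph :: "'v set \<Rightarrow> ('e \<Rightarrow> 'v set) \<Rightarrow> bool" where
  "simple_graph Vs ends \<longleftrightarrow> finite Vs \<and>
     (\<forall>e. ends e \<subseteq> Vs \<and> card (ends e) = 2) \<and> inj ends"

definition reach :: "('e \<Rightarrow> 'v set) \<Rightarrow> 'e set \<Rightarrow> 'v \<Rightarrow> 'v \<Rightarrow> bool" where
  "reach ends F = (\<lambda>a b. \<exists>e\<in>F. ends e = {a, b})\<^sup>*\<^sup>*"

definition connected_graph :: "'v set \<Rightarrow> ('e \<Rightarrow> 'v set) \<Rightarrow> bool" where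
  "connected_graph Vs ends \<longleftrightarrow> Vs \<noteq> {} \<and> (\<forall>u\<in>Vs. \<forall>v\<in>Vs. reach ends UNIV u v)"

definition is_bridge :: "('e \<Rightarrow> 'v set) \<Rightarrow> 'e \<Rightarrow> bool" where
  "is_bridge ends e \<longleftrightarrow> (\<exists>u v. ends e = {u, v} \<and> \<not> reach ends (UNIV - {e}) u v)"

text \<open>Independent sets of the graphic matroid: cycle-free edge sets (no edge of F
  lies on a cycle in F, i.e. its endpoints are not joined by a path in F minus it).\<close>
definition acyclic_edges :: "('e \<Rightarrow> 'v set) \<Rightarrow> 'e set \<Rightarrow> bool" where
  "acyclic_edges ends F \<longleftrightarrow>
     (\<forall>e\<in>F. \<forall>u v. ends e = {u, v} \<longrightarrow> \<not> reach ends (F - {e}) u v)"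

definition graphic_basis :: "('e \<Rightarrow> 'v set) \<Rightarrow> 'e set \<Rightarrow> bool" where
  "graphic_basis ends B \<longleftrightarrow> acyclic_edges ends B \<and>
     (\<forall>B'. acyclic_edges ends B' \<and> B \<subseteq> B' \<longrightarrow> B' = B)"

definition bcount :: "('e \<Rightarrow> 'v set) \<Rightarrow> 'e set \<Rightarrow> 'e set \<Rightarrow> nat" where
  "bcount ends I J = card {B. graphic_basis ends B \<and> I \<subseteq> B \<and> J \<inter> B = {}}"

text \<open>Points of T^d are represented by points of R^{d+1} = real^'e; all notions below are
  invariant under adding multiples of (1,...,1), so the cells are the preimages of the
  cells in T^d.\<close>

definition e_set :: "'e set \<Rightarrow> real ^ 'e" where
  "e_set B = (\<chi> i. if i \<in> B then 1 else 0)"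

definition in_sector :: "real ^ 'e \<Rightarrow> real ^ 'e \<Rightarrow> 'e \<Rightarrow> bool" where
  "in_sector v x m \<longleftrightarrow> (\<forall>i. (v - x) $ m \<le> (v - x) $ i)"

definition ftype :: "'b set \<Rightarrow> ('b \<Rightarrow> real ^ 'e) \<Rightarrow> real ^ 'e \<Rightarrow> 'e \<Rightarrow> 'b set" where
  "ftype N v x m = {l \<in> N. in_sector (v l) x m}"

definition ctype :: "'b set \<Rightarrow> ('b \<Rightarrow> real ^ 'e) \<Rightarrow> real ^ 'e \<Rightarrow> 'e \<Rightarrow> nat" where
  "ctype N v x = (\<lambda>m. card (ftype N v x m))"

definition trop_cell :: "'b set \<Rightarrow> ('b \<Rightarrow> real ^ 'e) \<Rightarrow> (real ^ 'e) set \<Rightarrow> bool" where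
  "trop_cell N v C \<longleftrightarrow> (\<exists>x. C = closure {y. ftype N v y = ftype N v x})"

definition max_trop_cell :: "'b set \<Rightarrow> ('b \<Rightarrow> real ^ 'e) \<Rightarrow> (real ^ 'e) set \<Rightarrow> bool" where
  "max_trop_cell N v C \<longleftrightarrow> trop_cell N v C \<and> \<not> (\<exists>C'. trop_cell N v C' \<and> C \<subset> C')"

text \<open>Coarse types of maximal cells (coarse type of a cell = coarse type of its relative
  interior points).\<close>
definition max_cell_ctypes :: "'b set \<Rightarrow> ('b \<Rightarrow> real ^ 'e) \<Rightarrow> ('e \<Rightarrow> nat) set" where
  "max_cell_ctypes N v =
     {ctype N v x | x C. max_trop_cell N v C \<and> x \<in> rel_interior C}"

end

theory Submission
  imports Defs
begin

text \<open>The closure of the cell of y is the region of all z whose fine type contains that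
  of y, so maximal cells are the cells of points with inclusion-minimal type. Every such type
  is already the type of a generic point (off the hyperplanes z_i = z_j and z_i = z_j + 1),
  obtained by a small perturbation, and generic points have minimal type.

  At a generic point with largest coordinate a, the vertex -e_B lies in the sector of a iff
  a is in B or B avoids every coordinate within distance 1 of the maximum; it lies in the
  sector of another coordinate m within that distance iff m is in B and B avoids all larger
  coordinates; the remaining sectors are empty. Listing the coordinates within distance 1 of
  the maximum in decreasing order gives a chain i_1, i_2, ...; cutting it after the longest
  prefix avoided by some basis does not change the counts, which gives the constraint that
  the complement of {i_1, ..., i_d'} contains a basis, and hence d' + k <= d + 1.
  Conversely every chain is realised by an explicit generic point.\<close>

definition type_region :: "'b set \<Rightarrow> ('b \<Rightarrow> real ^ 'e) \<Rightarrow> real ^ 'e \<Rightarrow> (real ^ 'e) set" where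
  "type_region N v y = {z. \<forall>m. ftype N v y m \<subseteq> ftype N v z m}"

definition type_minimal :: "'b set \<Rightarrow> ('b \<Rightarrow> real ^ 'e) \<Rightarrow> real ^ 'e \<Rightarrow> bool" where
  "type_minimal N v y \<longleftrightarrow>
     (\<forall>z. (\<forall>m. ftype N v z m \<subseteq> ftype N v y m) \<longrightarrow> ftype N v z = ftype N v y)"

lemma ex_min_coordinate:
  fixes f :: "'e::finite \<Rightarrow> 'a::linorder"
  obtains m where "\<And>i. f m \<le> f i"
proof -
  have "Min (range f) \<in> range f" by (rule Min_in) auto
  then obtain m where m: "f m = Min (range f)" by (metis rangeE)
  show thesis by (rule that[of m]) (auto simp: m intro!: Min_le)
qed

lemma ex_sector:
  fixes x :: "real ^ 'e::finite"
  assumes "l \<in> N"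
  obtains m where "l \<in> ftype N v x m"
proof -
  obtain m where m: "\<And>i. (v l - x) $ m \<le> (v l - x) $ i"
    using ex_min_coordinate[of "\<lambda>i. (v l - x) $ i"] by blast
  with assms show thesis by (intro that[of m]) (simp add: ftype_def in_sector_def)
qed

lemma in_sector_convex_combination:
  assumes "in_sector w z m" "in_sector w y m" "0 \<le> a" "0 \<le> b" "a + b = 1"
  shows "in_sector w (a *\<^sub>R z + b *\<^sub>R y) m"
  unfolding in_sector_def
proof
  fix i
  have comp: "(w - (a *\<^sub>R z + b *\<^sub>R y)) $ q = a * (w - z) $ q + b * (w - y) $ q" for q
  proof -
    have "w $ q = a * w $ q + b * w $ q" using \<open>a + b = 1\<close> by (metis distrib_right mult_1)
    then show ?thesis by (simp add: algebra_simps)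
  qed
  show "(w - (a *\<^sub>R z + b *\<^sub>R y)) $ m \<le> (w - (a *\<^sub>R z + b *\<^sub>R y)) $ i"
    unfolding comp using assms unfolding in_sector_def
    by (intro add_mono mult_left_mono) auto
qed

lemma type_region_self: "y \<in> type_region N v y"
  unfolding type_region_def by auto

lemma closed_type_region: "closed (type_region N v (y :: real ^ 'e::finite))"
proof -
  have "type_region N v y =
      (\<Inter>m. \<Inter>l\<in>ftype N v y m. \<Inter>i. {z. (v l - z) $ m \<le> (v l - z) $ i})"
    unfolding type_region_def ftype_def in_sector_def by auto
  then show ?thesis
    by (simp add: closed_INT closed_Collect_le continuous_on_component continuous_intros)
qed

lemma convex_type_region: "convex (type_region N v y)"
  unfolding convex_def
proof (intro ballI allI impI)
  fix a b and u w :: real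
  assume "a \<in> type_region N v y" "b \<in> type_region N v y" and uw: "0 \<le> u" "0 \<le> w" "u + w = 1"
  then have "in_sector (v l) a m" "in_sector (v l) b m" if "l \<in> ftype N v y m" for l m
    using that unfolding type_region_def ftype_def by auto
  with uw show "u *\<^sub>R a + w *\<^sub>R b \<in> type_region N v y"
    unfolding type_region_def by (auto simp: ftype_def intro: in_sector_convex_combination)
qed

text \<open>One inclusion is convexity of the sectors; for the other, a vertex that leaves the
  sector m at y lies strictly closer to another sector there, and this strictness survives
  the convex combination.\<close>
lemma ftype_segment_type_region:
  assumes z: "z \<in> type_region N v y" and t: "0 < t" "t \<le> 1"
  shows "ftype N v (z + t *\<^sub>R (y - z)) = ftype N v y"
proof (intro ext equalityI subsetI)
  fix m l
  let ?p = "z + t *\<^sub>R (y - z)"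
  have p: "?p = (1 - t) *\<^sub>R z + t *\<^sub>R y" by (simp add: algebra_simps)
  have comp: "(v l - ?p) $ q = (1 - t) * (v l - z) $ q + t * (v l - y) $ q" for q
    by (simp add: algebra_simps)
  {
    assume l: "l \<in> ftype N v y m"
    then have "l \<in> ftype N v z m" using z unfolding type_region_def by auto
    with l t show "l \<in> ftype N v ?p m"
      unfolding p ftype_def by (auto intro: in_sector_convex_combination)
  next
    assume l: "l \<in> ftype N v ?p m"
    then have lN: "l \<in> N" unfolding ftype_def by auto
    obtain i where i: "l \<in> ftype N v y i" using ex_sector[OF lN] by blast
    show "l \<in> ftype N v y m"
    proof (rule ccontr)
      assume "l \<notin> ftype N v y m"
      then obtain j where "(v l - y) $ j < (v l - y) $ m"
        using lN unfolding ftype_def in_sector_def by (auto simp: not_le)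
      moreover have "(v l - y) $ i \<le> (v l - y) $ j"
        using i unfolding ftype_def in_sector_def by auto
      ultimately have "t * (v l - y) $ i < t * (v l - y) $ m" using t by simp
      moreover have "(1 - t) * (v l - z) $ i \<le> (1 - t) * (v l - z) $ m"
        using i z t unfolding type_region_def ftype_def in_sector_def
        by (intro mult_left_mono) auto
      moreover have "(v l - ?p) $ m \<le> (v l - ?p) $ i"
        using l unfolding ftype_def in_sector_def by auto
      ultimately show False unfolding comp by linarith
    qed
  }
qed

lemma closure_cell_eq_type_region:
  fixes y :: "real ^ 'e::finite"
  shows "closure {z. ftype N v z = ftype N v y} = type_region N v y"
proof
  show "closure {z. ftype N v z = ftype N v y} \<subseteq> type_region N v y"
    by (intro closure_minimal closed_type_region) (auto simp: type_region_def)
next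
  show "type_region N v y \<subseteq> closure {z. ftype N v z = ftype N v y}"
  proof
    fix z assume z: "z \<in> type_region N v y"
    define f where "f n = z + inverse (real (Suc n)) *\<^sub>R (y - z)" for n
    have "f n \<in> {z. ftype N v z = ftype N v y}" for n
      unfolding f_def using ftype_segment_type_region[OF z] by (simp add: field_simps)
    moreover have "f \<longlonglongrightarrow> z + 0 *\<^sub>R (y - z)"
      unfolding f_def by (intro tendsto_intros LIMSEQ_inverse_real_of_nat)
    ultimately show "z \<in> closure {z. ftype N v z = ftype N v y}"
      unfolding closure_sequential by auto
  qed
qed

lemma ftype_rel_interior_type_region:
  fixes y :: "real ^ 'e::finite"
  assumes x: "x \<in> rel_interior (type_region N v y)"
  shows "ftype N v x = ftype N v y"
proof -
  from x obtain e where e: "e > 0"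
      "ball x e \<inter> affine hull (type_region N v y) \<subseteq> type_region N v y"
    and xR: "x \<in> type_region N v y"
    unfolding mem_rel_interior_ball by blast
  define c where "c = norm (x - y) + 1"
  have c: "c > 0" by (simp add: c_def add_nonneg_pos)
  define \<epsilon> where "\<epsilon> = e / (2 * c)"
  have \<epsilon>: "\<epsilon> > 0" using e c by (simp add: \<epsilon>_def)
  define q where "q = (1 + \<epsilon>) *\<^sub>R x + (- \<epsilon>) *\<^sub>R y"
  have "q \<in> affine hull (type_region N v y)"
    unfolding q_def
    by (rule mem_affine[OF affine_affine_hull]) (auto intro: hull_inc xR type_region_self)
  moreover have "dist x q < e"
  proof -
    have "dist x q = \<epsilon> * norm (x - y)"
      using \<epsilon> by (simp add: q_def dist_norm algebra_simps flip: scaleR_diff_right)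
    also have "\<dots> < \<epsilon> * c" using \<epsilon> by (simp add: c_def)
    also have "\<dots> < e" using c e by (simp add: \<epsilon>_def)
    finally show ?thesis .
  qed
  ultimately have q: "q \<in> type_region N v y" using e by auto
  have "y - q = (1 + \<epsilon>) *\<^sub>R (y - x)" by (simp add: q_def algebra_simps)
  then have "q + (\<epsilon> / (1 + \<epsilon>)) *\<^sub>R (y - q) = q + \<epsilon> *\<^sub>R (y - x)"
    using \<epsilon> by simp
  also have "\<dots> = x" by (simp add: q_def algebra_simps)
  finally show ?thesis
    using ftype_segment_type_region[OF q, of "\<epsilon> / (1 + \<epsilon>)"] \<epsilon> by simp
qed

lemma type_region_subset_iff:
  "type_region N v y \<subseteq> type_region N v z \<longleftrightarrow> (\<forall>m. ftype N v z m \<subseteq> ftype N v y m)"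
  using type_region_self[of y N v] unfolding type_region_def by blast

lemma max_trop_cell_type_region_iff:
  fixes y :: "real ^ 'e::finite"
  shows "max_trop_cell N v (type_region N v y) \<longleftrightarrow> type_minimal N v y"
proof -
  have eq: "type_region N v y = type_region N v z \<longleftrightarrow> ftype N v y = ftype N v z" for z
    unfolding set_eq_subset type_region_subset_iff fun_eq_iff by blast
  have "max_trop_cell N v (type_region N v y) \<longleftrightarrow>
      \<not> (\<exists>z. type_region N v y \<subset> type_region N v z)"
    unfolding max_trop_cell_def trop_cell_def closure_cell_eq_type_region by blast
  also have "\<dots> \<longleftrightarrow> type_minimal N v y"
    unfolding type_minimal_def psubset_eq type_region_subset_iff eq by metis
  finally show ?thesis .
qed

lemma max_cell_ctypes_eq_type_minimal:
  fixes v :: "'b \<Rightarrow> real ^ 'e::finite"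
  shows "max_cell_ctypes N v = {ctype N v y | y. type_minimal N v y}"
proof (intro set_eqI iffI)
  fix t assume "t \<in> max_cell_ctypes N v"
  then obtain x y where t: "t = ctype N v x" and y: "max_trop_cell N v (type_region N v y)"
    and x: "x \<in> rel_interior (type_region N v y)"
    unfolding max_cell_ctypes_def max_trop_cell_def trop_cell_def closure_cell_eq_type_region
    by blast
  then show "t \<in> {ctype N v y | y. type_minimal N v y}"
    using ftype_rel_interior_type_region[OF x] max_trop_cell_type_region_iff
    by (auto simp: ctype_def)
next
  fix t assume "t \<in> {ctype N v y | y. type_minimal N v y}"
  then obtain y where t: "t = ctype N v y" and y: "type_minimal N v y" by blast
  obtain x where x: "x \<in> rel_interior (type_region N v y)"
    using rel_interior_eq_empty[OF convex_type_region] type_region_self by blast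
  then have "t = ctype N v x"
    using ftype_rel_interior_type_region[OF x] by (simp add: t ctype_def)
  with x y show "t \<in> max_cell_ctypes N v"
    unfolding max_cell_ctypes_def max_trop_cell_type_region_iff[symmetric] by blast
qed

lemma in_sector_neg_e_set:
  "in_sector (- e_set B) z m \<longleftrightarrow> (\<forall>j. z$j + of_bool (j \<in> B) \<le> z$m + of_bool (m \<in> B))"
  unfolding in_sector_def e_set_def by (auto simp: of_bool_def) (smt (verit))+

lemma ftype_neg_e_set:
  "B \<in> ftype N (\<lambda>B. - e_set B) z m \<longleftrightarrow>
     B \<in> N \<and> (\<forall>j. z$j + of_bool (j \<in> B) \<le> z$m + of_bool (m \<in> B))"
  unfolding ftype_def in_sector_neg_e_set by simp

text \<open>Points off the hyperplanes z_i = z_j and z_i = z_j + 1 bounding the sectors of the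
  vertices -e_B.\<close>
definition generic :: "real ^ 'e \<Rightarrow> bool" where
  "generic z \<longleftrightarrow> inj (($) z) \<and> (\<forall>i j. z$i \<noteq> z$j + 1)"

lemma generic_sector_unique:
  assumes "generic z" "in_sector (- e_set B) z m" "in_sector (- e_set B) z m'"
  shows "m = m'"
proof -
  have eq: "z$m + of_bool (m \<in> B) = z$m' + of_bool (m' \<in> B)"
    using assms(2,3) unfolding in_sector_neg_e_set by (meson order_antisym)
  have "z$m \<noteq> z$m' + 1" "z$m' \<noteq> z$m + 1" "inj (($) z)"
    using assms(1) unfolding generic_def by auto
  with eq show ?thesis by (cases "m \<in> B"; cases "m' \<in> B") (auto dest: injD)
qed

lemma generic_type_minimal:
  fixes z :: "real ^ 'e::finite"
  assumes "generic z"
  shows "type_minimal N (\<lambda>B. - e_set B) z"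
  unfolding type_minimal_def
proof (intro allI impI ext equalityI)
  fix w m
  assume sub: "\<forall>m. ftype N (\<lambda>B. - e_set B) w m \<subseteq> ftype N (\<lambda>B. - e_set B) z m"
  then show "ftype N (\<lambda>B. - e_set B) w m \<subseteq> ftype N (\<lambda>B. - e_set B) z m" by blast
  show "ftype N (\<lambda>B. - e_set B) z m \<subseteq> ftype N (\<lambda>B. - e_set B) w m"
  proof
    fix B assume B: "B \<in> ftype N (\<lambda>B. - e_set B) z m"
    then have "B \<in> N" unfolding ftype_def by simp
    then obtain m' where m': "B \<in> ftype N (\<lambda>B. - e_set B) w m'" by (rule ex_sector)
    with sub have "B \<in> ftype N (\<lambda>B. - e_set B) z m'" by blast
    with B have "m = m'" using generic_sector_unique[OF assms] unfolding ftype_def by blast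
    with m' show "B \<in> ftype N (\<lambda>B. - e_set B) w m" by simp
  qed
qed

lemma eventually_at_right_affine_neq:
  fixes c d b :: real
  assumes "d \<noteq> 0"
  shows "\<forall>\<^sub>F \<epsilon> in at_right 0. c + \<epsilon> * d \<noteq> b"
  using eventually_neq_at_within[of "(b - c) / d" 0 "{0<..}"]
  by (rule eventually_mono) (use assms in \<open>auto simp: field_simps\<close>)

lemma eventually_perturbation_strict_sector_ineqs:
  fixes y w :: "real ^ 'e::finite"
  shows "\<forall>\<^sub>F \<epsilon> in at_right 0. \<forall>B m j. y$m + of_bool (m \<in> B) < y$j + of_bool (j \<in> B) \<longrightarrow>
    (y + \<epsilon> *\<^sub>R w)$m + of_bool (m \<in> B) < (y + \<epsilon> *\<^sub>R w)$j + of_bool (j \<in> B)"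
proof (intro eventually_all_finite)
  fix B :: "'e set" and m j :: 'e
  let ?f = "\<lambda>\<epsilon>. (y$j + \<epsilon> * w$j + of_bool (j \<in> B)) - (y$m + \<epsilon> * w$m + of_bool (m \<in> B))"
  show "\<forall>\<^sub>F \<epsilon> in at_right 0. y$m + of_bool (m \<in> B) < y$j + of_bool (j \<in> B) \<longrightarrow>
      (y + \<epsilon> *\<^sub>R w)$m + of_bool (m \<in> B) < (y + \<epsilon> *\<^sub>R w)$j + of_bool (j \<in> B)"
  proof (cases "y$m + of_bool (m \<in> B) < y$j + of_bool (j \<in> B)")
    case True
    have "(?f \<longlongrightarrow> ?f 0) (at_right 0)" by (intro tendsto_intros)
    moreover have "?f 0 > 0" using True by simp
    ultimately have "\<forall>\<^sub>F \<epsilon> in at_right 0. ?f \<epsilon> > 0" by (rule order_tendstoD(1))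
    then show ?thesis by (rule eventually_mono) simp
  qed simp
qed

lemma eventually_generic_perturbation:
  fixes y w :: "real ^ 'e::finite"
  assumes w: "inj (($) w)"
  shows "\<forall>\<^sub>F \<epsilon> in at_right 0. generic (y + \<epsilon> *\<^sub>R w)"
proof -
  have "\<forall>\<^sub>F \<epsilon> in at_right 0. \<forall>i j. (y + \<epsilon> *\<^sub>R w)$i \<noteq> (y + \<epsilon> *\<^sub>R w)$j + 1 \<and>
      (i \<noteq> j \<longrightarrow> (y + \<epsilon> *\<^sub>R w)$i \<noteq> (y + \<epsilon> *\<^sub>R w)$j)"
  proof (intro eventually_all_finite)
    fix i j :: 'e
    show "\<forall>\<^sub>F \<epsilon> in at_right 0. (y + \<epsilon> *\<^sub>R w)$i \<noteq> (y + \<epsilon> *\<^sub>R w)$j + 1 \<and>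
        (i \<noteq> j \<longrightarrow> (y + \<epsilon> *\<^sub>R w)$i \<noteq> (y + \<epsilon> *\<^sub>R w)$j)"
    proof (cases "i = j")
      case False
      then have "w$i - w$j \<noteq> 0" using w by (auto dest: injD)
      then have "\<forall>\<^sub>F \<epsilon> in at_right 0. (y$i - y$j) + \<epsilon> * (w$i - w$j) \<noteq> 1 \<and>
          (y$i - y$j) + \<epsilon> * (w$i - w$j) \<noteq> 0"
        by (intro eventually_conj eventually_at_right_affine_neq)
      then show ?thesis by (rule eventually_mono) (auto simp: algebra_simps)
    qed simp
  qed
  then show ?thesis by (rule eventually_mono) (auto simp: generic_def inj_def)
qed

lemma ex_generic_refinement:
  fixes y :: "real ^ 'e::finite"
  obtains z where "generic z" "\<And>m. ftype N (\<lambda>B. - e_set B) z m \<subseteq> ftype N (\<lambda>B. - e_set B) y m"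
proof -
  obtain g :: "'e \<Rightarrow> nat" where "inj g"
    using finite_imp_inj_to_nat_seg[of "UNIV :: 'e set"] by auto
  then have w: "inj (($) (\<chi> j. real (g j)))" by (simp add: inj_def)
  obtain \<epsilon> where gen: "generic (y + \<epsilon> *\<^sub>R (\<chi> j. real (g j)))"
    and strict: "\<forall>B m j. y$m + of_bool (m \<in> B) < y$j + of_bool (j \<in> B) \<longrightarrow>
      (y + \<epsilon> *\<^sub>R (\<chi> j. real (g j)))$m + of_bool (m \<in> B) <
      (y + \<epsilon> *\<^sub>R (\<chi> j. real (g j)))$j + of_bool (j \<in> B)"
    using eventually_happens[OF eventually_conj[OF
          eventually_generic_perturbation[OF w, where y = y]
          eventually_perturbation_strict_sector_ineqs[where y = y and w = "\<chi> j. real (g j)"]]]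
    by auto
  have "ftype N (\<lambda>B. - e_set B) (y + \<epsilon> *\<^sub>R (\<chi> j. real (g j))) m \<subseteq> ftype N (\<lambda>B. - e_set B) y m"
    for m
    unfolding subset_iff ftype_neg_e_set using strict by (meson not_le)
  with gen show thesis by (rule that)
qed

definition family_count :: "'e set set \<Rightarrow> 'e set \<Rightarrow> 'e set \<Rightarrow> nat" where
  "family_count N I J = card {B \<in> N. I \<subseteq> B \<and> J \<inter> B = {}}"

text \<open>The coarse type prescribed by a chain i 1, ..., i n of coordinates; the chain is
  read off a generic point by listing the coordinates within distance 1 of the maximum in
  decreasing order.\<close>
definition chain_type :: "'e set set \<Rightarrow> (nat \<Rightarrow> 'e) \<Rightarrow> nat \<Rightarrow> ('e \<Rightarrow> nat) \<Rightarrow> bool" where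
  "chain_type N i n t \<longleftrightarrow>
     t (i 1) = family_count N {i 1} {} + family_count N {} (i ` {1..n}) \<and>
     (\<forall>l\<in>{2..n}. t (i l) = family_count N {i l} (i ` {1..<l})) \<and>
     (\<forall>j. j \<notin> i ` {1..n} \<longrightarrow> t j = 0)"

lemma ftype_neg_e_set_top:
  assumes "\<And>j. z$j \<le> z$a"
  shows "ftype N (\<lambda>B. - e_set B) z a =
    {B \<in> N. a \<in> B} \<union> {B \<in> N. B \<inter> {j. z$a - 1 < z$j} = {}}"
  using assms unfolding set_eq_iff ftype_neg_e_set
  by (auto simp: of_bool_def) (smt (verit))+

lemma ftype_neg_e_set_band:
  assumes "\<And>j. z$j \<le> z$a" "z$a - 1 < z$m" "z$m < z$a"
  shows "ftype N (\<lambda>B. - e_set B) z m = {B \<in> N. m \<in> B \<and> {j. z$m < z$j} \<inter> B = {}}"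
  using assms unfolding set_eq_iff ftype_neg_e_set
  by (auto simp: of_bool_def) (smt (verit))+

lemma ftype_neg_e_set_low:
  assumes "z$m < z$a - 1"
  shows "ftype N (\<lambda>B. - e_set B) z m = {}"
  using assms unfolding set_eq_iff ftype_neg_e_set
  by (auto simp: of_bool_def) (smt (verit))+

lemma decreasing_enumeration_greater:
  fixes f :: "'a \<Rightarrow> 'b::linorder" and r :: nat
  assumes i: "bij_betw i {1..r} A" and l: "l \<in> {1..r}"
    and dec: "\<And>l l'. l \<in> {1..r} \<Longrightarrow> l' \<in> {1..r} \<Longrightarrow> l < l' \<Longrightarrow> f (i l') < f (i l)"
    and up: "\<And>j. f (i l) < f j \<Longrightarrow> j \<in> A"
  shows "{j. f (i l) < f j} = i ` {1..<l}"
proof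
  show "{j. f (i l) < f j} \<subseteq> i ` {1..<l}"
  proof
    fix j assume j: "j \<in> {j. f (i l) < f j}"
    then have "j \<in> i ` {1..r}" using up i by (auto simp: bij_betw_def)
    then obtain l' where l': "l' \<in> {1..r}" "j = i l'" by blast
    have "l' < l"
    proof (rule ccontr)
      assume "\<not> l' < l"
      then consider "l' = l" | "l < l'" by linarith
      then show False using dec[OF l l'(1)] j l'(2) by cases auto
    qed
    with l' show "j \<in> i ` {1..<l}" by auto
  qed
  show "i ` {1..<l} \<subseteq> {j. f (i l) < f j}" using dec l by auto
qed

lemma generic_chain_type:
  fixes z :: "real ^ 'e::finite"
  assumes gen: "generic z"
    and i: "bij_betw i {1..r} {j. z$(i 1) - 1 < z$j}"
    and dec: "\<And>l l'. l \<in> {1..r} \<Longrightarrow> l' \<in> {1..r} \<Longrightarrow> l < l' \<Longrightarrow> z$(i l') < z$(i l)"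
  shows "chain_type N i r (ctype N (\<lambda>B. - e_set B) z)"
proof -
  let ?A = "{j. z$(i 1) - 1 < z$j}"
  have A: "i ` {1..r} = ?A" using i by (simp add: bij_betw_def)
  have "i 1 \<in> i ` {1..r}" unfolding A by simp
  then have r: "1 \<in> {1..r}" by auto
  have top: "z$j \<le> z$(i 1)" for j
  proof (cases "j \<in> ?A")
    case True
    then obtain l where "l \<in> {1..r}" "j = i l" using A by blast
    then show ?thesis using dec[of 1 l] r by (cases "l = 1") auto
  qed simp
  have above: "{j. z$(i l) < z$j} = i ` {1..<l}" if l: "l \<in> {1..r}" for l
  proof (rule decreasing_enumeration_greater[where f = "\<lambda>j. z$j", OF i l dec])
    fix j assume "z$(i l) < z$j"
    moreover have "i l \<in> ?A" using A l by blast
    ultimately show "j \<in> ?A" by simp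
  qed
  have low: "z$j < z$(i 1) - 1" if "j \<notin> i ` {1..r}" for j
  proof -
    have "z$j \<le> z$(i 1) - 1" using that unfolding A by auto
    moreover have "z$(i 1) \<noteq> z$j + 1" using gen by (simp add: generic_def)
    ultimately show ?thesis by linarith
  qed
  show ?thesis unfolding chain_type_def ctype_def
  proof (intro conjI ballI allI impI)
    have "{B \<in> N. i 1 \<in> B} \<inter> {B \<in> N. B \<inter> ?A = {}} = {}" by auto
    then show "card (ftype N (\<lambda>B. - e_set B) z (i 1)) =
        family_count N {i 1} {} + family_count N {} (i ` {1..r})"
      unfolding ftype_neg_e_set_top[of z "i 1", OF top] family_count_def A
      by (simp add: card_Un_disjoint Int_commute)
  next
    fix l assume l: "l \<in> {2..r}"
    then have l1: "l \<in> {1..r}" "1 < l" by auto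
    then have "z$(i 1) - 1 < z$(i l)" "z$(i l) < z$(i 1)" using A dec[OF r] by auto
    then show "card (ftype N (\<lambda>B. - e_set B) z (i l)) = family_count N {i l} (i ` {1..<l})"
      by (simp add: ftype_neg_e_set_band[of z "i 1", OF top] above[OF l1(1)] family_count_def)
  next
    fix j assume "j \<notin> i ` {1..r}"
    then show "card (ftype N (\<lambda>B. - e_set B) z j) = 0"
      using ftype_neg_e_set_low[OF low] by simp
  qed
qed

lemma chain_type_truncate:
  assumes t: "chain_type N i r t" and n: "1 \<le> n" "n \<le> r"
    and hit: "n < r \<Longrightarrow> \<forall>B\<in>N. B \<inter> i ` {1..n} \<noteq> {}"
  shows "chain_type N i n t"
proof -
  have vanish: "family_count N I J = 0" if "n < r" "i ` {1..n} \<subseteq> J" for I J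
  proof -
    have empty: "{B \<in> N. I \<subseteq> B \<and> J \<inter> B = {}} = {}" using hit[OF that(1)] that(2) by blast
    show ?thesis unfolding family_count_def empty by simp
  qed
  have t1: "t (i 1) = family_count N {i 1} {} + family_count N {} (i ` {1..r})"
    and t2: "\<And>l. l \<in> {2..r} \<Longrightarrow> t (i l) = family_count N {i l} (i ` {1..<l})"
    and t3: "\<And>j. j \<notin> i ` {1..r} \<Longrightarrow> t j = 0"
    using t unfolding chain_type_def by auto
  have "family_count N {} (i ` {1..r}) = family_count N {} (i ` {1..n})"
  proof (cases "n = r")
    case False
    with n have "n < r" by simp
    then show ?thesis using n by (simp add: vanish image_mono)
  qed simp
  moreover have "t j = 0" if j: "j \<notin> i ` {1..n}" for j
  proof (cases "j \<in> i ` {1..r}")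
    case True
    then obtain l where l: "l \<in> {1..r}" "j = i l" by blast
    with j n have "n < l" by auto
    with l n have "t j = family_count N {i l} (i ` {1..<l})" by (simp add: t2)
    also have "\<dots> = 0" using \<open>n < l\<close> l by (intro vanish) auto
    finally show ?thesis .
  qed (simp add: t3)
  ultimately show ?thesis using n t1 t2 unfolding chain_type_def by simp
qed

lemma chain_type_unique:
  assumes "chain_type N i n t" "chain_type N i n t'"
  shows "t = t'"
proof
  fix j
  show "t j = t' j"
  proof (cases "j \<in> i ` {1..n}")
    case True
    then obtain l where l: "l \<in> {1..n}" "j = i l" by blast
    show ?thesis
    proof (cases "l = 1")
      case False
      with l have "l \<in> {2..n}" by auto
      with assms l show ?thesis by (simp add: chain_type_def)
    qed (use assms l in \<open>simp add: chain_type_def\<close>)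
  qed (use assms in \<open>simp add: chain_type_def\<close>)
qed

lemma ex_decreasing_enumeration:
  fixes f :: "'a \<Rightarrow> 'b::linorder"
  assumes "finite A" "inj_on f A"
  obtains i where "bij_betw i {1..card A} A"
    "\<And>l l'. l \<in> {1..card A} \<Longrightarrow> l' \<in> {1..card A} \<Longrightarrow> l < l' \<Longrightarrow> f (i l') < f (i l)"
proof -
  define ws where "ws = rev (sorted_list_of_set (f ` A))"
  have ws: "sorted_wrt (>) ws" "set ws = f ` A" "distinct ws" "length ws = card A"
    using assms by (simp_all add: ws_def sorted_wrt_rev strict_sorted_list_of_set card_image)
  define i where "i l = inv_into A f (ws ! (l - 1))" for l
  have fi: "f (i l) = ws ! (l - 1)" "i l \<in> A" if "l \<in> {1..card A}" for l
    using that ws(2,4) nth_mem[of "l - 1" ws] by (auto simp: i_def f_inv_into_f inv_into_into)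
  have dec: "f (i l') < f (i l)" if "l \<in> {1..card A}" "l' \<in> {1..card A}" "l < l'" for l l'
    using that ws(4) sorted_wrt_nth_less[OF ws(1), of "l - 1" "l' - 1"] by (simp add: fi)
  have "inj_on i {1..card A}"
  proof
    fix l l' assume "l \<in> {1..card A}" "l' \<in> {1..card A}" "i l = i l'"
    then show "l = l'" using dec by (metis less_irrefl linorder_neqE_nat)
  qed
  moreover have "i ` {1..card A} = A"
    using fi(2) \<open>finite A\<close> calculation by (intro card_subset_eq) (auto simp: card_image)
  ultimately show thesis using that dec by (simp add: bij_betw_def)
qed

lemma generic_of_blocks:
  fixes k r :: "'e::finite \<Rightarrow> real"
  assumes "\<And>j. 0 \<le> r j" "\<And>j. r j < 1" "\<And>j. k j \<in> {0, 3}"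
    and "\<And>p p'. k p = k p' \<Longrightarrow> r p = r p' \<Longrightarrow> p = p'"
  shows "generic (\<chi> j. - k j - r j)"
  unfolding generic_def inj_def
proof (intro conjI allI impI)
  fix p p'
  show "(\<chi> j. - k j - r j) $ p \<noteq> (\<chi> j. - k j - r j) $ p' + 1"
    using assms(1-3)[of p] assms(1-3)[of p'] by auto
  assume "(\<chi> j. - k j - r j) $ p = (\<chi> j. - k j - r j) $ p'"
  then show "p = p'"
    using assms(1-3)[of p] assms(1-3)[of p'] assms(4)[of p p'] by auto
qed

text \<open>The witness puts the chain in decreasing order into (-1, 0) and the remaining
  coordinates, pairwise distinct, into (-4, -3].\<close>
lemma ex_generic_chain_point:
  fixes i :: "nat \<Rightarrow> 'e::finite"
  assumes inj: "inj_on i {1..n}" and n: "1 \<le> n"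
  obtains z where "generic z" "bij_betw i {1..n} {j. z$(i 1) - 1 < z$j}"
    "\<And>l l'. l \<in> {1..n} \<Longrightarrow> l' \<in> {1..n} \<Longrightarrow> l < l' \<Longrightarrow> z$(i l') < z$(i l)"
proof -
  obtain g :: "'e \<Rightarrow> nat" and c where g: "range g = {..<c}" "inj g"
    using finite_imp_inj_to_nat_seg[of "UNIV :: 'e set"] by auto
  let ?S = "i ` {1..n}"
  define M where "M = real n + real c + 1"
  define k where "k j = (if j \<in> ?S then 0 else 3 :: real)" for j
  define r where "r j = (if j \<in> ?S then real (inv_into {1..n} i j) else real (g j)) / M" for j
  define z :: "real ^ 'e" where "z = (\<chi> j. - k j - r j)"
  have M: "M > 0" by (simp add: M_def add_nonneg_pos)
  have rS: "r (i l) = real l / M" if "l \<in> {1..n}" for l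
    using that inj by (simp add: r_def inv_into_f_f)
  have r_bounds: "0 \<le> r j \<and> r j < 1" for j
  proof (cases "j \<in> ?S")
    case True
    then obtain l where "l \<in> {1..n}" "j = i l" by blast
    then show ?thesis using rS M by (auto simp: M_def)
  next
    case False
    have "g j < c" using g(1) by auto
    then show ?thesis using False M by (auto simp: r_def M_def)
  qed
  have "generic z" unfolding z_def
  proof (rule generic_of_blocks)
    fix p p' assume "k p = k p'" "r p = r p'"
    then show "p = p'" using M g(2) inj_on_inv_into[of ?S i "{1..n}"]
      by (auto simp: k_def r_def split: if_splits dest: injD inj_onD)
  qed (use r_bounds in \<open>auto simp: k_def\<close>)
  moreover have dec: "z$(i l') < z$(i l)" if "l \<in> {1..n}" "l' \<in> {1..n}" "l < l'" for l l'
    using that M by (simp add: z_def k_def rS divide_strict_right_mono)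
  moreover have "?S = {j. z$(i 1) - 1 < z$j}"
  proof -
    have "i 1 \<in> ?S" using n by simp
    have "z$(i 1) - 1 < z$j \<longleftrightarrow> j \<in> ?S" for j
      using r_bounds[of j] r_bounds[of "i 1"] \<open>i 1 \<in> ?S\<close>
      by (cases "j \<in> ?S") (simp_all add: z_def k_def)
    then show ?thesis by auto
  qed
  ultimately show thesis using that inj by (simp add: bij_betw_def)
qed

lemma ex_boundary_le:
  fixes P :: "nat \<Rightarrow> bool"
  assumes "P 0"
  shows "\<exists>d\<le>m. P d \<and> (d < m \<longrightarrow> \<not> P (Suc d))"
proof (induction m)
  case (Suc m)
  then obtain d where d: "d \<le> m" "P d" "d < m \<longrightarrow> \<not> P (Suc d)" by blast
  show ?case
  proof (cases "d = m \<and> P (Suc m)")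
    case True
    then show ?thesis by auto
  next
    case False
    with d show ?thesis by (intro exI[of _ d]) auto
  qed
qed (use assms in auto)

lemma generic_ex_chain_type:
  fixes z :: "real ^ 'e::finite"
  assumes gen: "generic z"
  obtains i r where "1 \<le> r" "inj_on i {1..r}" "chain_type N i r (ctype N (\<lambda>B. - e_set B) z)"
proof -
  obtain a where "\<And>j. - z$a \<le> - z$j" using ex_min_coordinate[of "\<lambda>j. - z$j"] by blast
  then have a: "z$j \<le> z$a" for j by simp
  define A where "A = {j. z$a - 1 < z$j}"
  have "inj_on (($) z) A" using gen inj_on_subset[of "($) z" UNIV A] by (simp add: generic_def)
  then obtain i where i: "bij_betw i {1..card A} A"
    and dec: "\<And>l l'. l \<in> {1..card A} \<Longrightarrow> l' \<in> {1..card A} \<Longrightarrow> l < l' \<Longrightarrow> z$(i l') < z$(i l)"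
    using ex_decreasing_enumeration[of A "($) z"] by auto
  have "a \<in> i ` {1..card A}" using i by (simp add: bij_betw_def A_def)
  then obtain l where l: "l \<in> {1..card A}" "i l = a" by blast
  then have r: "1 \<in> {1..card A}" by auto
  have "z$(i 1) = z$a"
    using a[of "i 1"] dec[OF r l(1)] l by (cases "l = 1") auto
  then have "bij_betw i {1..card A} {j. z$(i 1) - 1 < z$j}" using i by (simp add: A_def)
  then have "chain_type N i (card A) (ctype N (\<lambda>B. - e_set B) z)"
    using gen dec by (intro generic_chain_type)
  with r i show thesis by (intro that) (auto simp: bij_betw_def)
qed

lemma type_minimal_chain_type:
  fixes y :: "real ^ 'e::finite"
  assumes N: "N \<noteq> {}" and k: "\<forall>B\<in>N. card B = k"
    and y: "type_minimal N (\<lambda>B. - e_set B) y"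
  obtains d' i where "d' \<le> CARD('e) - k" "inj_on i {1..d'+1}" "\<exists>B\<in>N. B \<subseteq> UNIV - i ` {1..d'}"
    "chain_type N i (d'+1) (ctype N (\<lambda>B. - e_set B) y)"
proof -
  obtain z where z: "generic z" "\<And>m. ftype N (\<lambda>B. - e_set B) z m \<subseteq> ftype N (\<lambda>B. - e_set B) y m"
    using ex_generic_refinement[where N = N and y = y] by blast
  with y have "ftype N (\<lambda>B. - e_set B) z = ftype N (\<lambda>B. - e_set B) y"
    unfolding type_minimal_def by blast
  then have yz: "ctype N (\<lambda>B. - e_set B) y = ctype N (\<lambda>B. - e_set B) z"
    by (simp add: ctype_def)
  obtain i r where r: "1 \<le> r" and i: "inj_on i {1..r}"
    and t: "chain_type N i r (ctype N (\<lambda>B. - e_set B) z)"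
    using generic_ex_chain_type[OF z(1)] by blast
  define P where "P d \<longleftrightarrow> (\<exists>B\<in>N. B \<inter> i ` {1..d} = {})" for d
  have "P 0" using N by (auto simp: P_def)
  then obtain d' where d': "d' \<le> r - 1" "P d'" "d' < r - 1 \<longrightarrow> \<not> P (Suc d')"
    using ex_boundary_le[of P "r - 1"] by blast
  then obtain B where B: "B \<in> N" "B \<inter> i ` {1..d'} = {}" unfolding P_def by blast
  have inj': "inj_on i {1..d'+1}" using inj_on_subset[OF i, of "{1..d'+1}"] d' r by simp
  show thesis
  proof (rule that)
    have "inj_on i {1..d'}" using inj_on_subset[OF inj', of "{1..d'}"] by simp
    then have "card (i ` {1..d'}) = d'" by (simp add: card_image)
    then have "card B + d' = card (B \<union> i ` {1..d'})" using B(2) by (simp add: card_Un_disjoint)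
    also have "\<dots> \<le> CARD('e)" by (rule card_mono) simp_all
    finally show "d' \<le> CARD('e) - k" using k B(1) by simp
    show "inj_on i {1..d'+1}" by (fact inj')
    show "\<exists>B\<in>N. B \<subseteq> UNIV - i ` {1..d'}" using B by blast
    have "d' + 1 < r \<Longrightarrow> \<forall>B\<in>N. B \<inter> i ` {1..d'+1} \<noteq> {}" using d'(3) by (simp add: P_def)
    with d' r show "chain_type N i (d'+1) (ctype N (\<lambda>B. - e_set B) y)"
      unfolding yz by (intro chain_type_truncate[OF t]) simp_all
  qed
qed

text \<open>The side conditions on the chain only matter for the inclusion from left to right:
  by chain_type_truncate, a chain violating them describes the same tuple as a shorter one.\<close>
lemma max_cell_ctypes_neg_e_set:
  fixes N :: "'e::finite set set"
  assumes "N \<noteq> {}" "\<forall>B\<in>N. card B = k"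
  shows "max_cell_ctypes N (\<lambda>B. - e_set B) =
    {t. \<exists>d' i. d' \<le> CARD('e) - k \<and> inj_on i {1..d'+1} \<and>
         (\<exists>B\<in>N. B \<subseteq> UNIV - i ` {1..d'}) \<and> chain_type N i (d'+1) t}"
proof (intro set_eqI iffI)
  fix t assume "t \<in> max_cell_ctypes N (\<lambda>B. - e_set B)"
  then obtain y where t: "t = ctype N (\<lambda>B. - e_set B) y" and y: "type_minimal N (\<lambda>B. - e_set B) y"
    by (auto simp: max_cell_ctypes_eq_type_minimal)
  obtain d' i where "d' \<le> CARD('e) - k" "inj_on i {1..d'+1}" "\<exists>B\<in>N. B \<subseteq> UNIV - i ` {1..d'}"
    "chain_type N i (d'+1) t"
    unfolding t by (rule type_minimal_chain_type[OF assms y])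
  then show "t \<in> {t. \<exists>d' i. d' \<le> CARD('e) - k \<and> inj_on i {1..d'+1} \<and>
      (\<exists>B\<in>N. B \<subseteq> UNIV - i ` {1..d'}) \<and> chain_type N i (d'+1) t}"
    by blast
next
  fix t assume "t \<in> {t. \<exists>d' i. d' \<le> CARD('e) - k \<and> inj_on i {1..d'+1} \<and>
      (\<exists>B\<in>N. B \<subseteq> UNIV - i ` {1..d'}) \<and> chain_type N i (d'+1) t}"
  then obtain d' and i :: "nat \<Rightarrow> 'e" where i: "inj_on i {1..d'+1}" and t: "chain_type N i (d'+1) t"
    by blast
  obtain z where z: "generic z" "bij_betw i {1..d'+1} {j. z$(i 1) - 1 < z$j}"
    "\<And>l l'. l \<in> {1..d'+1} \<Longrightarrow> l' \<in> {1..d'+1} \<Longrightarrow> l < l' \<Longrightarrow> z$(i l') < z$(i l)"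
    using ex_generic_chain_point[OF i le_add2] by blast
  then have "chain_type N i (d'+1) (ctype N (\<lambda>B. - e_set B) z)" by (intro generic_chain_type)
  with t have "t = ctype N (\<lambda>B. - e_set B) z" by (rule chain_type_unique)
  then show "t \<in> max_cell_ctypes N (\<lambda>B. - e_set B)"
    unfolding max_cell_ctypes_eq_type_minimal using generic_type_minimal[OF z(1)] by blast
qed

lemma ex_graphic_basis:
  fixes ends :: "'e::finite \<Rightarrow> 'v set"
  obtains B where "graphic_basis ends B"
proof -
  have "{} \<in> {B. acyclic_edges ends B}" by (simp add: acyclic_edges_def)
  then obtain B where "acyclic_edges ends B" "\<And>B'. acyclic_edges ends B' \<Longrightarrow> B \<subseteq> B' \<Longrightarrow> B = B'"
    using finite_has_maximal[of "{B. acyclic_edges ends B}"] by auto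
  then show thesis by (intro that) (auto simp: graphic_basis_def)
qed

theorem mainTheorem1:
  fixes Vs :: "'v set" and ends :: "'e::finite \<Rightarrow> 'v set" and k :: nat
  assumes "simple_graph Vs ends"
    and "connected_graph Vs ends"
    and "\<forall>e. \<not> is_bridge ends e"
    and "\<forall>B. graphic_basis ends B \<longrightarrow> card B = k"
  shows "max_cell_ctypes {B. graphic_basis ends B} (\<lambda>B. - e_set B) =
    {t. \<exists>(d'::nat) (i::nat \<Rightarrow> 'e).
          d' \<le> CARD('e) - k \<and>
          inj_on i {1..d'+1} \<and>
          (\<exists>B. graphic_basis ends B \<and> B \<subseteq> UNIV - i ` {1..d'}) \<and>
          t (i 1) = bcount ends {i 1} {} + bcount ends {} (i ` {1..d'+1}) \<and>
          (\<forall>l\<in>{2..d'+1}. t (i l) = bcount ends {i l} (i ` {1..<l})) \<and>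
          (\<forall>j. j \<notin> i ` {1..d'+1} \<longrightarrow> t j = 0)}"
proof -
  let ?N = "{B. graphic_basis ends B}"
  have "?N \<noteq> {}" using ex_graphic_basis by blast
  moreover have "\<forall>B\<in>?N. card B = k" using assms(4) by simp
  moreover have "bcount ends = family_count ?N"
    by (simp add: fun_eq_iff bcount_def family_count_def)
  ultimately show ?thesis by (simp add: max_cell_ctypes_neg_e_set chain_type_def)
qed

end
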